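(* Let $d\geq 1$ be an integer and let $\varphi(\varepsilon,\zeta)=\sum_{i,j\geq 0}a_{i,j}\varepsilon^i\zeta^j$ be a power series converging in some polydisc of $\mathbb{C}^2$ centred at $(0,0)$, with $\varphi(0,0)=a_{0,0}=0$. Let $\delta>0$, let $\tau\in\mathbb{C}\setminus\{0\}$, and let $g:\{\varepsilon\in\mathbb{C}:0<|\varepsilon|<\delta\}\to\mathbb{C}$ be a continuous function such that $g(\varepsilon)\sim \tau/\varepsilon$ as $\varepsilon\to 0$ and $|g(\varepsilon)-\tau/\varepsilon|$ is bounded. Then for every entire function $\psi:\mathbb{C}\to\mathbb{C}$, $$\lim_{\varepsilon\to 0}\psi\big(g(\varepsilon)\,\varphi(\varepsilon,\varepsilon\Omega)\big)=\psi\Big(\tau\,\frac{\partial\varphi}{\partial\varepsilon}(0,0)\,I_d+\tau\,\frac{\partial\varphi}{\partial\zeta}(0,0)\,\Omega\Big),$$ the convergence being uniform with respect to $\Omega$ in any compact subset of $\mathbb{C}^{d\times d}$.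
   Context: For $\Omega\in\mathbb{C}^{d\times d}$, $\varphi(\varepsilon,\varepsilon\Omega)$ denotes the matrix $\sum_{i,j}a_{i,j}\varepsilon^{i+j}\Omega^j$, which converges when $|\varepsilon|$ is small enough relative to $\|\Omega\|$ (for $\Omega$ in a fixed compact set this holds for all sufficiently small $|\varepsilon|$). For an entire function $\psi(\zeta)=\sum_k b_k\zeta^k$ and a matrix $X\in\mathbb{C}^{d\times d}$, $\psi(X)=\sum_k b_kX^k$. $I_d$ is the $d\times d$ identity matrix. *)

theory Defs
  imports "HOL-Analysis.Analysis" "HOL-Library.Landau_Symbols"
begin

text \<open>Square complex matrices of size d = CARD('n) are modelled as complex ^ 'n ^ 'n,
  with matrix product (**) and identity mat 1.\<close>

primrec cmat_pow :: "complex ^ 'n ^ 'n \<Rightarrow> nat \<Rightarrow> complex ^ 'n ^ 'n" where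
  "cmat_pow A 0 = mat 1"
| "cmat_pow A (Suc k) = A ** cmat_pow A k"

definition cmat_scale :: "complex \<Rightarrow> complex ^ 'n ^ 'n \<Rightarrow> complex ^ 'n ^ 'n" where
  "cmat_scale c A = (\<chi> r s. c * (A $ r $ s))"

definition phi2 :: "(nat \<Rightarrow> nat \<Rightarrow> complex) \<Rightarrow> complex \<Rightarrow> complex \<Rightarrow> complex" where
  "phi2 a e z = (\<Sum>\<^sub>\<infinity>(i,j)\<in>UNIV. a i j * e ^ i * z ^ j)"

text \<open>The matrix phi(e, e Omega) = sum a_ij e^(i+j) Omega^j.\<close>
definition phi_mat :: "(nat \<Rightarrow> nat \<Rightarrow> complex) \<Rightarrow> complex \<Rightarrow> complex ^ 'n ^ 'n \<Rightarrow> complex ^ 'n ^ 'n" where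
  "phi_mat a e \<Omega> = (\<Sum>\<^sub>\<infinity>(i,j)\<in>UNIV. cmat_scale (a i j * e ^ (i + j)) (cmat_pow \<Omega> j))"

definition psi_mat :: "(nat \<Rightarrow> complex) \<Rightarrow> complex ^ 'n ^ 'n \<Rightarrow> complex ^ 'n ^ 'n" where
  "psi_mat b X = (\<Sum>k. cmat_scale (b k) (cmat_pow X k))"

end

theory Submission
  imports Defs
begin

text \<open>Write \<open>L(\<Omega>) = \<phi>\<^sub>\<epsilon>(0,0) I + \<phi>\<^sub>\<zeta>(0,0) \<Omega>\<close>. Since \<open>a\<^sub>0\<^sub>0 = 0\<close>, the double series gives
  \<open>\<phi>(\<epsilon>, \<epsilon>\<Omega>) = \<epsilon> L(\<Omega>) + O(\<epsilon>\<^sup>2)\<close> uniformly for bounded \<open>\<Omega>\<close>, because every remaining term has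
  total degree at least two in \<open>\<epsilon>\<close>. As \<open>g(\<epsilon>) = \<tau>/\<epsilon> + O(1)\<close>, the product \<open>g(\<epsilon>) \<phi>(\<epsilon>, \<epsilon>\<Omega>)\<close>
  differs from \<open>\<tau> L(\<Omega>)\<close> by \<open>O(\<epsilon>)\<close>, uniformly on \<open>K\<close>. Finally \<open>\<psi>\<close> is continuous on matrices,
  hence uniformly continuous on a compact ball containing all these arguments.\<close>

lemma cmat_scale_zero [simp]: "cmat_scale 0 A = 0"
  by (simp add: cmat_scale_def vec_eq_iff)

lemma cmat_scale_add: "cmat_scale c (A + B) = cmat_scale c A + cmat_scale c B"
  by (simp add: cmat_scale_def vec_eq_iff distrib_left)

lemma cmat_scale_cmat_scale: "cmat_scale c (cmat_scale d A) = cmat_scale (c * d) A"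
  by (simp add: cmat_scale_def vec_eq_iff)

lemma norm_cmat_scale: "norm (cmat_scale c (A::complex^'n^'n)) = norm c * norm A"
proof -
  have "\<And>r. L2_set (\<lambda>s. norm (c * A$r$s)) UNIV = norm c * L2_set (\<lambda>s. norm (A$r$s)) UNIV"
    by (simp add: norm_mult L2_set_right_distrib)
  then show ?thesis
    by (simp add: cmat_scale_def norm_vec_def L2_set_right_distrib)
qed

lemma norm_vec_le_sum_norm: "norm (x::'a::real_normed_vector^'n) \<le> (\<Sum>i\<in>UNIV. norm (x$i))"
  by (simp add: norm_vec_def L2_set_le_sum)

lemma norm_matrix_entry_le: "norm (A $ r $ s) \<le> norm (A::'a::real_normed_vector^'n^'m)"
  by (rule order_trans[OF Finite_Cartesian_Product.norm_nth_le Finite_Cartesian_Product.norm_nth_le])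

lemma norm_matrix_mult_le:
  "norm ((A::complex^'n^'n) ** (B::complex^'n^'n)) \<le> real CARD('n)^3 * norm A * norm B"
proof -
  let ?d = "real CARD('n)"
  have entry: "norm ((A ** B) $ r $ s) \<le> ?d * (norm A * norm B)" for r s
  proof -
    have "norm ((A ** B) $ r $ s) \<le> (\<Sum>t\<in>UNIV. norm (A$r$t) * norm (B$t$s))"
      unfolding matrix_matrix_mult_def by (simp add: norm_mult order_trans[OF norm_sum])
    also have "\<dots> \<le> (\<Sum>t\<in>(UNIV::'n set). norm A * norm B)"
      by (intro sum_mono mult_mono) (auto simp: norm_matrix_entry_le)
    finally show ?thesis by simp
  qed
  have "norm (A ** B) \<le> (\<Sum>r\<in>UNIV. \<Sum>s\<in>UNIV. norm ((A ** B) $ r $ s))"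
    by (intro order_trans[OF norm_vec_le_sum_norm] sum_mono norm_vec_le_sum_norm)
  also have "\<dots> \<le> (\<Sum>r\<in>(UNIV::'n set). \<Sum>s\<in>(UNIV::'n set). ?d * (norm A * norm B))"
    by (rule sum_mono)+ (rule entry)
  finally show ?thesis by (simp add: power3_eq_cube mult_ac)
qed

lemma norm_cmat_pow_le:
  "norm (cmat_pow (A::complex^'n^'n) j) \<le> (real CARD('n)^3 * norm A)^j * norm (mat 1 :: complex^'n^'n)"
proof (induction j)
  case (Suc j)
  have "norm (cmat_pow A (Suc j)) \<le> real CARD('n)^3 * norm A * norm (cmat_pow A j)"
    by (simp add: norm_matrix_mult_le)
  also have "\<dots> \<le> real CARD('n)^3 * norm A * ((real CARD('n)^3 * norm A)^j * norm (mat 1 :: complex^'n^'n))"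
    by (intro mult_left_mono Suc) auto
  finally show ?case by (simp add: mult_ac)
qed simp

lemma continuous_on_cmat_pow: "continuous_on S (\<lambda>X::complex^'n^'n. cmat_pow X k)"
  by (induction k)
    (auto simp: matrix_matrix_mult_def intro!: continuous_on_vec_lambda continuous_on_sum
      continuous_on_mult continuous_on_component)

lemma continuous_on_cmat_scale:
  "continuous_on S f \<Longrightarrow> continuous_on S (\<lambda>x. cmat_scale c (f x :: complex^'n^'n))"
  unfolding cmat_scale_def
  by (intro continuous_on_vec_lambda continuous_on_mult continuous_on_const continuous_on_component)

lemma continuous_on_psi_mat:
  assumes entire: "\<forall>z. summable (\<lambda>k. b k * z ^ k)"
  shows "continuous_on UNIV (psi_mat b :: complex^'n^'n \<Rightarrow> _)"
proof -
  have ball: "continuous_on (cball 0 R) (psi_mat b :: complex^'n^'n \<Rightarrow> _)" if "0 \<le> R" for R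
  proof -
    define c where "c = real CARD('n)^3 * R"
    define f where "f = (\<lambda>k (X::complex^'n^'n). cmat_scale (b k) (cmat_pow X k))"
    define M where "M = (\<lambda>k. norm (b k * complex_of_real c ^ k) * norm (mat 1::complex^'n^'n))"
    have "norm (f k X) \<le> M k" if "X \<in> cball 0 R" for k X
    proof -
      have "norm (f k X) \<le> norm (b k) * ((real CARD('n)^3 * norm X)^k * norm (mat 1::complex^'n^'n))"
        unfolding f_def norm_cmat_scale by (intro mult_left_mono norm_cmat_pow_le) auto
      also have "\<dots> \<le> norm (b k) * (c^k * norm (mat 1::complex^'n^'n))"
        using that \<open>0 \<le> R\<close> by (auto simp: c_def intro!: mult_left_mono mult_right_mono power_mono)
      also have "\<dots> = M k"
        using \<open>0 \<le> R\<close> by (simp add: M_def c_def norm_mult norm_power)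
      finally show ?thesis .
    qed
    moreover have "summable M"
    proof -
      have "norm (complex_of_real c) < norm (complex_of_real (c + 1))"
        using \<open>0 \<le> R\<close> by (simp only: norm_of_real) (simp add: c_def)
      then show ?thesis
        unfolding M_def by (intro summable_mult2 powser_insidea[OF entire[rule_format]])
    qed
    ultimately have "uniform_limit (cball 0 R) (\<lambda>n X. \<Sum>k<n. f k X) (\<lambda>X. \<Sum>k. f k X) sequentially"
      by (rule Weierstrass_m_test)
    then have "continuous_on (cball 0 R) (\<lambda>X. \<Sum>k. f k X)"
      by (rule uniform_limit_theorem[rotated])
        (auto simp: f_def intro!: always_eventually continuous_on_sum continuous_on_cmat_scale
          continuous_on_cmat_pow)
    then show ?thesis by (simp add: f_def psi_mat_def)
  qed
  have "isCont (psi_mat b :: complex^'n^'n \<Rightarrow> _) X" for X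
    using continuous_on_subset[OF ball[of "norm X + 1"], of "ball 0 (norm X + 1)"]
    by (simp add: continuous_on_eq_continuous_at)
  then show ?thesis by (simp add: continuous_at_imp_continuous_on)
qed

lemma uniform_limit_at_0_if_norm_le:
  fixes f :: "'a::real_normed_vector \<Rightarrow> 'b \<Rightarrow> 'c::real_normed_vector"
  assumes "d > 0" and bound: "\<And>e y. 0 < norm e \<Longrightarrow> norm e < d \<Longrightarrow> y \<in> K \<Longrightarrow> norm (f e y - l y) \<le> C * norm e"
  shows "uniform_limit K f l (at 0)"
proof (rule uniform_limitI)
  fix \<epsilon> :: real assume "\<epsilon> > 0"
  have "((\<lambda>e. C * norm e) \<longlongrightarrow> 0) (at (0::'a))"
    by (intro tendsto_eq_intros) auto
  then have "\<forall>\<^sub>F e in at (0::'a). C * norm e < \<epsilon>"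
    using \<open>\<epsilon> > 0\<close> by (rule order_tendstoD(2))
  moreover have "\<forall>\<^sub>F e in at (0::'a). 0 < norm e \<and> norm e < d"
    using \<open>d > 0\<close> by (auto simp: eventually_at intro!: exI[of _ d])
  ultimately show "\<forall>\<^sub>F e in at 0. \<forall>y\<in>K. dist (f e y) (l y) < \<epsilon>"
    by eventually_elim (auto simp: dist_norm intro: le_less_trans[OF bound])
qed

lemma uniform_limit_compose_continuous:
  fixes h :: "'b::heine_borel \<Rightarrow> 'c::metric_space"
  assumes lim: "uniform_limit K f l F" and bdd: "bounded (l ` K)" and cont: "continuous_on UNIV h"
  shows "uniform_limit K (\<lambda>x y. h (f x y)) (\<lambda>y. h (l y)) F"
proof -
  obtain c B where B: "l ` K \<subseteq> cball c B"
    using bdd bounded_subset_cball by blast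
  have "\<forall>\<^sub>F x in F. \<forall>y\<in>K. dist (f x y) (l y) < 1"
    using uniform_limitD[OF lim] by simp
  then have "\<forall>\<^sub>F x in F. \<forall>y\<in>K. f x y \<in> cball c (B + 1)"
  proof eventually_elim
    case (elim x)
    show ?case
    proof
      fix y assume "y \<in> K"
      then have "dist c (l y) \<le> B" "dist (l y) (f x y) < 1"
        using B elim by (auto simp: dist_commute)
      then show "f x y \<in> cball c (B + 1)"
        using dist_triangle[of c "f x y" "l y"] by simp
    qed
  qed
  moreover have "uniformly_continuous_on (cball c (B + 1)) h"
    by (intro compact_uniformly_continuous continuous_on_subset[OF cont]) auto
  ultimately show ?thesis
    by (intro uniform_limit_compose_uniformly_continuous_on[OF lim]) auto
qed

definition coeff_majorant :: "(nat \<Rightarrow> nat \<Rightarrow> complex) \<Rightarrow> real \<Rightarrow> nat \<times> nat \<Rightarrow> real" where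
  "coeff_majorant a \<rho> p = norm (a (fst p) (snd p)) * \<rho> ^ (fst p + snd p)"

lemma coeff_majorant_nonneg: "0 \<le> \<rho> \<Longrightarrow> 0 \<le> coeff_majorant a \<rho> p"
  by (simp add: coeff_majorant_def)

lemma summable_coeff_majorant:
  assumes conv: "\<forall>e z. norm e < r \<longrightarrow> norm z < r \<longrightarrow> (\<lambda>(i,j). a i j * e ^ i * z ^ j) summable_on UNIV"
    and "0 \<le> \<rho>" "\<rho> < r"
  shows "coeff_majorant a \<rho> summable_on UNIV"
proof -
  let ?t = "\<lambda>(i,j). a i j * complex_of_real \<rho> ^ i * complex_of_real \<rho> ^ j"
  have "?t summable_on UNIV"
    using conv \<open>0 \<le> \<rho>\<close> \<open>\<rho> < r\<close> by simp
  then have "(\<lambda>p. norm (?t p)) summable_on UNIV"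
    by (simp add: summable_on_iff_abs_summable_on_complex)
  moreover have "(\<lambda>p. norm (?t p)) = coeff_majorant a \<rho>"
    using \<open>0 \<le> \<rho>\<close> by (auto simp: fun_eq_iff coeff_majorant_def norm_mult norm_power power_add)
  ultimately show ?thesis by simp
qed

lemma norm_infsum_minus_linear_terms_le:
  fixes G :: "nat \<times> nat \<Rightarrow> 'b::banach"
  assumes W: "W summable_on UNIV" "\<And>p. 0 \<le> W p"
    and G: "\<And>i j. norm (G (i,j)) \<le> W (i,j) * q ^ (i + j)"
    and q: "0 \<le> q" "q \<le> 1" and G00: "G (0,0) = 0"
  shows "norm (infsum G UNIV - (G (1,0) + G (0,1))) \<le> q\<^sup>2 * infsum W UNIV"
proof -
  define P :: "(nat \<times> nat) set" where "P = {(0,0), (1,0), (0,1)}"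
  have G_le_W: "norm (G p) \<le> W p" for p
  proof -
    have "norm (G p) \<le> W p * q ^ (fst p + snd p)"
      using G[of "fst p" "snd p"] by simp
    also have "\<dots> \<le> W p"
      using mult_left_mono[OF power_le_one[OF q] W(2)[of p]] by simp
    finally show ?thesis .
  qed
  have normG: "(\<lambda>p. norm (G p)) summable_on UNIV"
    by (rule summable_on_comparison_test[OF W(1)]) (use G_le_W in auto)
  then have "G summable_on UNIV"
    by (rule abs_summable_summable)
  then have "infsum G UNIV = infsum G (UNIV - P) + infsum G P"
    by (subst infsum_Diff) (auto simp: P_def)
  moreover have "infsum G P = G (1,0) + G (0,1)"
    by (simp add: P_def G00)
  ultimately have tail: "infsum G UNIV - (G (1,0) + G (0,1)) = infsum G (UNIV - P)"
    by simp
  have normG': "(\<lambda>p. norm (G p)) summable_on (UNIV - P)"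
    by (rule summable_on_subset_banach[OF normG]) auto
  have qW: "(\<lambda>p. q\<^sup>2 * W p) summable_on UNIV"
    by (rule summable_on_cmult_right[OF W(1)])
  have "norm (infsum G (UNIV - P)) \<le> infsum (\<lambda>p. norm (G p)) (UNIV - P)"
    by (rule norm_infsum_bound) (simp add: normG')
  also have "\<dots> \<le> infsum (\<lambda>p. q\<^sup>2 * W p) UNIV"
  proof (rule infsum_mono_neutral[OF normG' qW])
    fix p assume "p \<in> (UNIV - P) \<inter> UNIV"
    moreover obtain i j where p: "p = (i,j)" by (cases p)
    ultimately have "2 \<le> i + j"
      by (cases i; cases j) (auto simp: P_def)
    then have "W p * q ^ (i + j) \<le> W p * q\<^sup>2"
      by (intro mult_left_mono power_decreasing q W(2))
    then show "norm (G p) \<le> q\<^sup>2 * W p"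
      using G[of i j] by (simp add: p mult.commute)
  qed (simp_all add: W(2))
  also have "\<dots> = q\<^sup>2 * infsum W UNIV"
    by (rule infsum_cmult_right) (rule W(1))
  finally show ?thesis
    by (simp only: tail)
qed

lemma norm_phi2_minus_linear_le:
  assumes Ws: "coeff_majorant a \<rho> summable_on UNIV" and "\<rho> > 0" and a00: "a 0 0 = 0"
    and ez: "norm e \<le> s" "norm z \<le> s" "s \<le> \<rho>"
  shows "norm (phi2 a e z - (a 1 0 * e + a 0 1 * z)) \<le> (s / \<rho>)\<^sup>2 * infsum (coeff_majorant a \<rho>) UNIV"
proof -
  define G where "G = (\<lambda>(i,j). a i j * e ^ i * z ^ j)"
  have "0 \<le> s" using norm_ge_zero[of e] ez(1) by linarith
  have "norm (G (i,j)) \<le> coeff_majorant a \<rho> (i,j) * (s / \<rho>) ^ (i + j)" for i j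
  proof -
    have "norm (G (i,j)) = norm (a i j) * (norm e ^ i * norm z ^ j)"
      by (simp add: G_def norm_mult norm_power)
    also have "\<dots> \<le> norm (a i j) * (s ^ i * s ^ j)"
      by (intro mult_left_mono mult_mono power_mono ez) (use \<open>0 \<le> s\<close> in auto)
    also have "\<dots> = coeff_majorant a \<rho> (i,j) * (s / \<rho>) ^ (i + j)"
      using \<open>\<rho> > 0\<close> by (simp add: coeff_majorant_def power_add power_divide)
    finally show ?thesis .
  qed
  then have "norm (infsum G UNIV - (G (1,0) + G (0,1))) \<le> (s / \<rho>)\<^sup>2 * infsum (coeff_majorant a \<rho>) UNIV"
    using \<open>\<rho> > 0\<close> \<open>0 \<le> s\<close> ez(3)
    by (intro norm_infsum_minus_linear_terms_le[OF Ws coeff_majorant_nonneg]) (auto simp: G_def a00)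
  then show ?thesis
    by (simp add: G_def phi2_def)
qed

lemma has_field_derivative_0_if_quadratic_remainder:
  fixes F :: "'a::real_normed_field \<Rightarrow> 'a"
  assumes "\<rho> > 0" and "F 0 = 0"
    and remainder: "\<And>h. norm h \<le> \<rho> \<Longrightarrow> norm (F h - c * h) \<le> C * (norm h)\<^sup>2"
  shows "(F has_field_derivative c) (at 0)"
  unfolding DERIV_def
proof -
  have "((\<lambda>h. (F (0 + h) - F 0) / h - c) \<longlongrightarrow> 0) (at 0)"
  proof (rule Lim_null_comparison)
    have "\<forall>\<^sub>F h in at (0::'a). h \<noteq> 0 \<and> norm h < \<rho>"
      using \<open>\<rho> > 0\<close> by (auto simp: eventually_at intro!: exI[of _ \<rho>])
    then show "\<forall>\<^sub>F h in at 0. norm ((F (0 + h) - F 0) / h - c) \<le> C * norm h"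
    proof eventually_elim
      case (elim h)
      then have "norm ((F (0 + h) - F 0) / h - c) = norm (F h - c * h) / norm h"
        by (simp add: \<open>F 0 = 0\<close> field_simps flip: norm_divide)
      also have "\<dots> \<le> C * (norm h)\<^sup>2 / norm h"
        using elim remainder[of h] by (intro divide_right_mono) auto
      finally show ?case
        using elim by (simp add: power2_eq_square)
    qed
    show "((\<lambda>h. C * norm h) \<longlongrightarrow> 0) (at (0::'a))"
      by (intro tendsto_eq_intros) auto
  qed
  then show "((\<lambda>h. (F (0 + h) - F 0) / h) \<longlongrightarrow> c) (at 0)"
    by (simp add: Lim_null[symmetric])
qed

lemma deriv_phi2_partials:
  assumes Ws: "coeff_majorant a \<rho> summable_on UNIV" and "\<rho> > 0" and a00: "a 0 0 = 0"
  shows "deriv (\<lambda>e. phi2 a e 0) 0 = a 1 0" and "deriv (\<lambda>z. phi2 a 0 z) 0 = a 0 1"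
proof -
  define C where "C = infsum (coeff_majorant a \<rho>) UNIV / \<rho>\<^sup>2"
  have bound_e: "norm (phi2 a h 0 - a 1 0 * h) \<le> C * (norm h)\<^sup>2" if "norm h \<le> \<rho>" for h
    using norm_phi2_minus_linear_le[OF Ws \<open>\<rho> > 0\<close> a00 order_refl _ that, of 0]
    by (simp add: C_def power_divide algebra_simps)
  have bound_z: "norm (phi2 a 0 h - a 0 1 * h) \<le> C * (norm h)\<^sup>2" if "norm h \<le> \<rho>" for h
    using norm_phi2_minus_linear_le[OF Ws \<open>\<rho> > 0\<close> a00 _ order_refl that, of 0]
    by (simp add: C_def power_divide algebra_simps)
  have "phi2 a 0 0 = 0"
    using bound_e[of 0] \<open>\<rho> > 0\<close> by simp
  then show "deriv (\<lambda>e. phi2 a e 0) 0 = a 1 0" and "deriv (\<lambda>z. phi2 a 0 z) 0 = a 0 1"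
    using \<open>\<rho> > 0\<close> bound_e bound_z
    by (auto intro!: DERIV_imp_deriv has_field_derivative_0_if_quadratic_remainder)
qed

definition phi_linear_part :: "(nat \<Rightarrow> nat \<Rightarrow> complex) \<Rightarrow> complex^'n^'n \<Rightarrow> complex^'n^'n" where
  "phi_linear_part a \<Omega> = cmat_scale (a 1 0) (mat 1) + cmat_scale (a 0 1) \<Omega>"

lemma norm_phi_mat_minus_linear_le:
  fixes \<Omega> :: "complex^'n^'n"
  assumes Ws: "coeff_majorant a \<rho> summable_on UNIV" and "\<rho> > 0" and a00: "a 0 0 = 0"
    and Mc: "real CARD('n)^3 * norm \<Omega> \<le> Mc" "1 \<le> Mc" and e: "norm e * Mc \<le> \<rho>"
  shows "norm (phi_mat a e \<Omega> - cmat_scale e (phi_linear_part a \<Omega>))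
     \<le> (norm e * Mc / \<rho>)\<^sup>2 * (norm (mat 1::complex^'n^'n) * infsum (coeff_majorant a \<rho>) UNIV)"
proof -
  define N1 where "N1 = norm (mat 1::complex^'n^'n)"
  define q where "q = norm e * Mc / \<rho>"
  define G where "G = (\<lambda>(i,j). cmat_scale (a i j * e ^ (i + j)) (cmat_pow \<Omega> j))"
  have "norm (G (i,j)) \<le> N1 * coeff_majorant a \<rho> (i,j) * q ^ (i + j)" for i j
  proof -
    have "norm (G (i,j)) = norm (a i j) * norm e ^ (i + j) * norm (cmat_pow \<Omega> j)"
      by (simp add: G_def norm_cmat_scale norm_mult norm_power)
    also have "\<dots> \<le> norm (a i j) * norm e ^ (i + j) * (Mc ^ (i + j) * N1)"
    proof -
      have "norm (cmat_pow \<Omega> j) \<le> (real CARD('n)^3 * norm \<Omega>) ^ j * N1"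
        unfolding N1_def by (rule norm_cmat_pow_le)
      also have "\<dots> \<le> Mc ^ j * N1"
        using Mc by (intro mult_right_mono power_mono) (auto simp: N1_def)
      also have "\<dots> \<le> Mc ^ (i + j) * N1"
        using Mc by (intro mult_right_mono power_increasing) (auto simp: N1_def)
      finally show ?thesis
        by (intro mult_left_mono) auto
    qed
    also have "\<dots> = N1 * coeff_majorant a \<rho> (i,j) * q ^ (i + j)"
      using \<open>\<rho> > 0\<close> by (simp add: coeff_majorant_def q_def power_divide power_mult_distrib)
    finally show ?thesis .
  qed
  moreover have "0 \<le> q" "q \<le> 1"
    using e Mc \<open>\<rho> > 0\<close> by (auto simp: q_def)
  ultimately have "norm (infsum G UNIV - (G (1,0) + G (0,1))) \<le> q\<^sup>2 * infsum (\<lambda>p. N1 * coeff_majorant a \<rho> p) UNIV"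
    using \<open>\<rho> > 0\<close>
    by (intro norm_infsum_minus_linear_terms_le summable_on_cmult_right[OF Ws])
      (auto simp: G_def a00 N1_def coeff_majorant_nonneg)
  moreover have "G (1,0) + G (0,1) = cmat_scale e (phi_linear_part a \<Omega>)"
    by (simp add: G_def phi_linear_part_def cmat_scale_def vec_eq_iff matrix_mul_rid algebra_simps)
  moreover have "infsum G UNIV = phi_mat a e \<Omega>"
    by (simp add: G_def phi_mat_def)
  moreover have "infsum (\<lambda>p. N1 * coeff_majorant a \<rho> p) UNIV = N1 * infsum (coeff_majorant a \<rho>) UNIV"
    by (rule infsum_cmult_right) (rule Ws)
  ultimately show ?thesis
    by (simp only: q_def N1_def)
qed

lemma norm_cmat_scale_minus_le:
  fixes P L :: "complex^'n^'n"
  assumes P: "norm (P - cmat_scale e L) \<le> C * (norm e)\<^sup>2" and g: "norm (g - \<tau> / e) \<le> M"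
    and "e \<noteq> 0" "norm e \<le> 1"
  shows "norm (cmat_scale g P - cmat_scale \<tau> L) \<le> norm e * (M * norm L + (norm \<tau> + M) * C)"
proof -
  have "0 \<le> C * (norm e)\<^sup>2"
    by (rule order_trans[OF norm_ge_zero P])
  then have "0 \<le> C"
    using \<open>e \<noteq> 0\<close> by (simp add: zero_le_mult_iff)
  have "0 \<le> M"
    by (rule order_trans[OF norm_ge_zero g])
  have "norm g \<le> norm \<tau> / norm e + M"
    using norm_triangle_sub[of g "\<tau> / e"] g by (simp add: norm_divide)
  have "cmat_scale g P - cmat_scale \<tau> L = cmat_scale (e * (g - \<tau> / e)) L + cmat_scale g (P - cmat_scale e L)"
    using \<open>e \<noteq> 0\<close> by (simp add: cmat_scale_def vec_eq_iff field_simps)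
  then have "norm (cmat_scale g P - cmat_scale \<tau> L)
      \<le> norm (cmat_scale (e * (g - \<tau> / e)) L) + norm (cmat_scale g (P - cmat_scale e L))"
    by (simp only: norm_triangle_ineq)
  also have "\<dots> = norm e * norm (g - \<tau> / e) * norm L + norm g * norm (P - cmat_scale e L)"
    by (simp add: norm_cmat_scale norm_mult)
  also have "\<dots> \<le> norm e * M * norm L + (norm \<tau> / norm e + M) * (C * (norm e)\<^sup>2)"
    using g P \<open>norm g \<le> norm \<tau> / norm e + M\<close> \<open>0 \<le> M\<close>
    by (intro add_mono mult_mono mult_right_mono mult_left_mono) auto
  also have "\<dots> = norm e * (M * norm L + norm \<tau> * C + M * C * norm e)"
    using \<open>e \<noteq> 0\<close> by (simp add: power2_eq_square field_simps)
  also have "\<dots> \<le> norm e * (M * norm L + (norm \<tau> + M) * C)"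
    using mult_left_le[OF \<open>norm e \<le> 1\<close>, of "M * C"] \<open>0 \<le> C\<close> \<open>0 \<le> M\<close>
    by (intro mult_left_mono) (auto simp: algebra_simps)
  finally show ?thesis .
qed

lemma uniform_limit_cmat_scale_phi_mat:
  fixes K :: "(complex^'n^'n) set" and g :: "complex \<Rightarrow> complex"
  assumes Ws: "coeff_majorant a \<rho> summable_on UNIV" and "\<rho> > 0" and a00: "a 0 0 = 0"
    and "bounded K" and "\<delta> > 0"
    and g: "\<And>e. 0 < norm e \<Longrightarrow> norm e < \<delta> \<Longrightarrow> norm (g e - \<tau> / e) \<le> M"
  shows "uniform_limit K (\<lambda>e \<Omega>. cmat_scale (g e) (phi_mat a e \<Omega>))
           (\<lambda>\<Omega>. cmat_scale \<tau> (phi_linear_part a \<Omega>)) (at 0)"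
proof -
  obtain R where R: "\<And>\<Omega>. \<Omega> \<in> K \<Longrightarrow> norm \<Omega> \<le> R"
    using \<open>bounded K\<close> bounded_iff by blast
  define Mc where "Mc = max 1 (real CARD('n)^3 * R)"
  define C where "C = (Mc / \<rho>)\<^sup>2 * (norm (mat 1::complex^'n^'n) * infsum (coeff_majorant a \<rho>) UNIV)"
  define B where "B = norm (a 1 0) * norm (mat 1::complex^'n^'n) + norm (a 0 1) * R"
  have "1 \<le> Mc"
    by (simp add: Mc_def)
  show ?thesis
  proof (rule uniform_limit_at_0_if_norm_le)
    show "0 < min \<delta> (min 1 (\<rho> / Mc))"
      using \<open>\<delta> > 0\<close> \<open>\<rho> > 0\<close> \<open>1 \<le> Mc\<close> by simp
    fix e :: complex and \<Omega> assume e: "0 < norm e" "norm e < min \<delta> (min 1 (\<rho> / Mc))" and "\<Omega> \<in> K"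
    have "norm e * Mc \<le> \<rho>"
      using e \<open>1 \<le> Mc\<close> by (simp add: field_simps)
    moreover have "real CARD('n)^3 * norm \<Omega> \<le> Mc"
      using R[OF \<open>\<Omega> \<in> K\<close>] by (simp add: Mc_def le_max_iff_disj mult_left_mono)
    ultimately have "norm (phi_mat a e \<Omega> - cmat_scale e (phi_linear_part a \<Omega>)) \<le> C * (norm e)\<^sup>2"
      using norm_phi_mat_minus_linear_le[OF Ws \<open>\<rho> > 0\<close> a00 _ \<open>1 \<le> Mc\<close>]
      by (simp add: C_def power_divide power_mult_distrib mult_ac)
    then have "norm (cmat_scale (g e) (phi_mat a e \<Omega>) - cmat_scale \<tau> (phi_linear_part a \<Omega>))
        \<le> norm e * (M * norm (phi_linear_part a \<Omega>) + (norm \<tau> + M) * C)"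
      using g e by (intro norm_cmat_scale_minus_le) auto
    also have "\<dots> \<le> norm e * (M * B + (norm \<tau> + M) * C)"
    proof -
      have "norm (phi_linear_part a \<Omega>) \<le> B"
        unfolding phi_linear_part_def B_def using R[OF \<open>\<Omega> \<in> K\<close>]
        by (intro order_trans[OF norm_triangle_ineq] add_mono) (auto simp: norm_cmat_scale mult_left_mono)
      moreover have "0 \<le> M"
        using g e by (intro order_trans[OF norm_ge_zero]) auto
      ultimately show ?thesis
        by (intro mult_left_mono add_right_mono) auto
    qed
    finally show "norm (cmat_scale (g e) (phi_mat a e \<Omega>) - cmat_scale \<tau> (phi_linear_part a \<Omega>))
        \<le> (M * B + (norm \<tau> + M) * C) * norm e"
      by (simp add: mult.commute)
  qed
qed

text \<open>Only the bound on \<open>g(\<epsilon>) - \<tau>/\<epsilon>\<close> is used: it already implies \<open>g(\<epsilon>) \<sim> \<tau>/\<epsilon>\<close>.\<close>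

theorem lemma6p2:
  fixes a :: "nat \<Rightarrow> nat \<Rightarrow> complex"
    and b :: "nat \<Rightarrow> complex"
    and g :: "complex \<Rightarrow> complex"
    and \<delta> :: real and \<tau> :: complex
    and K :: "(complex ^ 'n ^ 'n) set"
  assumes conv: "\<exists>r>0. \<forall>e z. norm e < r \<longrightarrow> norm z < r \<longrightarrow>
                    (\<lambda>(i,j). a i j * e ^ i * z ^ j) summable_on UNIV"
    and a00: "a 0 0 = 0"
    and \<delta>pos: "\<delta> > 0"
    and \<tau>nz: "\<tau> \<noteq> 0"
    and gcont: "continuous_on {e. 0 < norm e \<and> norm e < \<delta>} g"
    and gasymp: "g \<sim>[at 0] (\<lambda>e. \<tau> / e)"
    and gbdd: "\<exists>M. \<forall>e. 0 < norm e \<and> norm e < \<delta> \<longrightarrow> norm (g e - \<tau> / e) \<le> M"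
    and entire: "\<forall>z. summable (\<lambda>k. b k * z ^ k)"
    and K: "compact K"
  shows "uniform_limit K
           (\<lambda>e \<Omega>. psi_mat b (cmat_scale (g e) (phi_mat a e \<Omega>)))
           (\<lambda>\<Omega>. psi_mat b (cmat_scale (\<tau> * deriv (\<lambda>e. phi2 a e 0) 0) (mat 1)
                          + cmat_scale (\<tau> * deriv (\<lambda>z. phi2 a 0 z) 0) \<Omega>))
           (at 0)"
proof -
  obtain r where "r > 0" and conv_r: "\<forall>e z. norm e < r \<longrightarrow> norm z < r \<longrightarrow>
      (\<lambda>(i,j). a i j * e ^ i * z ^ j) summable_on UNIV"
    using conv by blast
  define \<rho> where "\<rho> = r / 2"
  have "\<rho> > 0" and Ws: "coeff_majorant a \<rho> summable_on UNIV"
    using \<open>r > 0\<close> by (auto simp: \<rho>_def intro: summable_coeff_majorant[OF conv_r])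
  obtain M where M: "\<And>e. 0 < norm e \<Longrightarrow> norm e < \<delta> \<Longrightarrow> norm (g e - \<tau> / e) \<le> M"
    using gbdd by blast
  let ?L = "\<lambda>\<Omega>. cmat_scale \<tau> (phi_linear_part a \<Omega>)"
  have lim: "uniform_limit K (\<lambda>e \<Omega>. cmat_scale (g e) (phi_mat a e \<Omega>)) ?L (at 0)"
    by (rule uniform_limit_cmat_scale_phi_mat[OF Ws \<open>\<rho> > 0\<close> a00 compact_imp_bounded[OF K] \<delta>pos M])
  have "continuous_on K ?L"
    unfolding phi_linear_part_def
    by (intro continuous_on_cmat_scale continuous_on_add continuous_on_const continuous_on_id)
  then have "bounded (?L ` K)"
    using K by (intro compact_imp_bounded compact_continuous_image)
  from uniform_limit_compose_continuous[OF lim this continuous_on_psi_mat[OF entire]]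
  show ?thesis
    by (simp add: deriv_phi2_partials[OF Ws \<open>\<rho> > 0\<close> a00] phi_linear_part_def
        cmat_scale_add cmat_scale_cmat_scale)
qed

end
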